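(* Let $\mathcal{G}=(\mathcal{V},\mathcal{A})$ be the information-flow graph of a single-sender single-uniprior index-coding instance with message lengths $q_1,\dots,q_n$. Then \[ \ell^*(\mathcal{G}) \leq \sum_{k \in \mathcal{V}} q_k - \sum_{i \in \mathcal{L}(\mathcal{G})} q_i - \sum_{\mathcal{V}_{S} \in \mathbb{V}} \min_{a \in \mathcal{V}_{S}} q_a, \] where $\mathbb{V}$ is the set of vertex sets of all leaf SCCs of $\mathcal{G}$.
   Context: Single-sender single-uniprior index coding: there are $n$ receivers and $n$ independent messages $x_1,\dots,x_n$; message $x_i$ consists of $q_i\ge 1$ bits, each independently uniformly distributed on $\{0,1\}$. A single sender knows all messages. Receiver $i$ knows $x_i$ a priori and requests a set $\mathcal{W}_i$ of messages with $x_i\notin\mathcal{W}_i$. The information-flow graph is the directed graph $\mathcal{G}=(\mathcal{V},\mathcal{A})$ with $\mathcal{V}=\{1,\dots,n\}$ and an arc $(j\to i)\in\mathcal{A}$ iff $x_j\in\mathcal{W}_i$. An index code of length $\ell$ consists of an encoding function $E:\{0,1\}^{\sum_i q_i}\to\{0,1\}^\ell$ and, for each receiver $i$, a decoding function $D_i$ such that $D_i(E(x_1,\dots,x_n),x_i)$ equals the tuple of messages in $\mathcal{W}_i$ for all values of the messages. $\ell^*(\mathcal{G})$ denotes the minimum length of an index code. A leaf vertex is a vertex with no outgoing arcs; $\mathcal{L}(\mathcal{G})$ is the set of leaf vertices. A strongly connected component (SCC) is a maximal subgraph in which every ordered pair of vertices is joined by a directed path inside the subgraph. A leaf SCC is an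 SCC with at least two vertices from which no arc goes to a vertex outside the SCC. *)

theory Defs
  imports Main
begin

text \<open>Vertices are 1..n. An arc (j, i) means message x_j is requested by receiver i.
  A message assignment gives each vertex i a bit string of length q i.\<close>

definition msgs :: "nat \<Rightarrow> (nat \<Rightarrow> nat) \<Rightarrow> (nat \<Rightarrow> bool list) set" where
  "msgs n q = {x. (\<forall>i\<in>{1..n}. length (x i) = q i) \<and> (\<forall>i. i \<notin> {1..n} \<longrightarrow> x i = [])}"

definition is_index_code ::
  "nat \<Rightarrow> (nat \<times> nat) set \<Rightarrow> (nat \<Rightarrow> nat) \<Rightarrow> nat \<Rightarrow>
   ((nat \<Rightarrow> bool list) \<Rightarrow> bool list) \<Rightarrow> (nat \<Rightarrow> bool list \<Rightarrow> bool list \<Rightarrow> nat \<Rightarrow> bool list) \<Rightarrow> bool" where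
  "is_index_code n A q l E D \<longleftrightarrow>
     (\<forall>x\<in>msgs n q. length (E x) = l) \<and>
     (\<forall>x\<in>msgs n q. \<forall>i\<in>{1..n}. \<forall>j. (j, i) \<in> A \<longrightarrow> D i (E x) (x i) j = x j)"

definition has_index_code :: "nat \<Rightarrow> (nat \<times> nat) set \<Rightarrow> (nat \<Rightarrow> nat) \<Rightarrow> nat \<Rightarrow> bool" where
  "has_index_code n A q l \<longleftrightarrow> (\<exists>E D. is_index_code n A q l E D)"

definition opt_len :: "nat \<Rightarrow> (nat \<times> nat) set \<Rightarrow> (nat \<Rightarrow> nat) \<Rightarrow> nat" where
  "opt_len n A q = (LEAST l. has_index_code n A q l)"

definition leaf_vertices :: "nat \<Rightarrow> (nat \<times> nat) set \<Rightarrow> nat set" where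
  "leaf_vertices n A = {i \<in> {1..n}. \<not> (\<exists>k. (i, k) \<in> A)}"

definition strongly_connected_in :: "(nat \<times> nat) set \<Rightarrow> nat set \<Rightarrow> bool" where
  "strongly_connected_in A S \<longleftrightarrow> (\<forall>u\<in>S. \<forall>v\<in>S. (u, v) \<in> (A \<inter> (S \<times> S))\<^sup>*)"

definition is_scc :: "nat \<Rightarrow> (nat \<times> nat) set \<Rightarrow> nat set \<Rightarrow> bool" where
  "is_scc n A S \<longleftrightarrow> S \<noteq> {} \<and> S \<subseteq> {1..n} \<and> strongly_connected_in A S \<and>
     (\<forall>T. S \<subseteq> T \<and> T \<subseteq> {1..n} \<and> strongly_connected_in A T \<longrightarrow> T = S)"

definition is_leaf_scc :: "nat \<Rightarrow> (nat \<times> nat) set \<Rightarrow> nat set \<Rightarrow> bool" where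
  "is_leaf_scc n A S \<longleftrightarrow> is_scc n A S \<and> card S \<ge> 2 \<and> (\<forall>u\<in>S. \<forall>w. (u, w) \<in> A \<longrightarrow> w \<in> S)"

end

theory Submission
  imports Defs
begin

text \<open>Leaves request nothing, so their messages need not be sent. In a leaf SCC S let a be a
  vertex of minimal message length; every request of a receiver in S lies in S. For k in
  S - {a} send x_k XOR x_a (with x_a padded by zeros to length q_k): a receiver i in S knows
  x_a or recovers it from its own symbol, and then every x_k. All other messages are sent
  uncoded.\<close>

lemma strongly_connected_in_Un:
  assumes S: "strongly_connected_in A S" and T: "strongly_connected_in A T" and "S \<inter> T \<noteq> {}"
  shows "strongly_connected_in A (S \<union> T)"
proof -
  obtain v where v: "v \<in> S" "v \<in> T" using \<open>S \<inter> T \<noteq> {}\<close> by auto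
  let ?B = "A \<inter> ((S \<union> T) \<times> (S \<union> T))"
  have "(A \<inter> (S \<times> S))\<^sup>* \<subseteq> ?B\<^sup>*" "(A \<inter> (T \<times> T))\<^sup>* \<subseteq> ?B\<^sup>*"
    by (rule rtrancl_mono, blast)+
  then have "(u, v) \<in> ?B\<^sup>* \<and> (v, u) \<in> ?B\<^sup>*" if "u \<in> S \<union> T" for u
    using that S T v unfolding strongly_connected_in_def by blast
  then show ?thesis
    unfolding strongly_connected_in_def by (meson rtrancl_trans)
qed

lemma is_scc_disjoint:
  assumes "is_scc n A S" "is_scc n A T" "S \<inter> T \<noteq> {}"
  shows "S = T"
proof -
  have "strongly_connected_in A (S \<union> T)"
    using assms by (intro strongly_connected_in_Un) (simp_all add: is_scc_def)
  moreover have "S \<union> T \<subseteq> {1..n}" using assms by (simp add: is_scc_def)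
  ultimately have "S \<union> T = S" "S \<union> T = T"
    using assms(1,2) unfolding is_scc_def by (meson Un_upper1 Un_upper2)+
  then show ?thesis by simp
qed

lemma is_leaf_scc_subset: "is_leaf_scc n A S \<Longrightarrow> S \<subseteq> {1..n}"
  by (simp add: is_leaf_scc_def is_scc_def)

lemma is_leaf_scc_finite: "is_leaf_scc n A S \<Longrightarrow> finite S"
  by (rule finite_subset[OF is_leaf_scc_subset]) simp_all

lemma is_leaf_scc_nonempty: "is_leaf_scc n A S \<Longrightarrow> S \<noteq> {}"
  by (simp add: is_leaf_scc_def is_scc_def)

lemma is_leaf_scc_closed: "is_leaf_scc n A S \<Longrightarrow> u \<in> S \<Longrightarrow> (u, w) \<in> A \<Longrightarrow> w \<in> S"
  by (simp add: is_leaf_scc_def)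

lemma is_leaf_scc_unique:
  assumes "is_leaf_scc n A S" "is_leaf_scc n A S'" "k \<in> S" "k \<in> S'"
  shows "S = S'"
proof (rule is_scc_disjoint)
  show "is_scc n A S" "is_scc n A S'" using assms(1,2) by (simp_all add: is_leaf_scc_def)
  show "S \<inter> S' \<noteq> {}" using assms(3,4) by blast
qed

lemma is_leaf_scc_has_out_arc:
  assumes "is_leaf_scc n A S" "u \<in> S"
  obtains w where "(u, w) \<in> A"
proof -
  from assms have "\<not> S \<subseteq> {u}"
    using card_mono[of "{u}" S] is_leaf_scc_finite by (auto simp: is_leaf_scc_def)
  then obtain w where w: "w \<in> S" "w \<noteq> u" by auto
  then have "(u, w) \<in> (A \<inter> (S \<times> S))\<^sup>*"
    using assms by (auto simp: is_leaf_scc_def is_scc_def strongly_connected_in_def)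
  with w(2) show thesis
    by (auto elim: converse_rtranclE intro: that)
qed

lemma is_leaf_scc_disjoint_leaf_vertices:
  "is_leaf_scc n A S \<Longrightarrow> k \<in> S \<Longrightarrow> k \<notin> leaf_vertices n A"
  by (auto simp: leaf_vertices_def elim: is_leaf_scc_has_out_arc)

definition xor_pad :: "bool list \<Rightarrow> bool list \<Rightarrow> bool list" where
  "xor_pad u v = map2 (\<noteq>) u (v @ replicate (length u) False)"

lemma length_xor_pad [simp]: "length (xor_pad u v) = length u"
  by (simp add: xor_pad_def)

lemma nth_xor_pad:
  "i < length u \<Longrightarrow> xor_pad u v ! i = (u ! i \<noteq> (v @ replicate (length u) False) ! i)"
  by (simp add: xor_pad_def)

lemma xor_pad_xor_pad [simp]: "xor_pad (xor_pad u v) v = u"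
  by (rule nth_equalityI) (auto simp: nth_xor_pad)

lemma xor_pad_inj_right:
  assumes "xor_pad u v = xor_pad u v'" "length v = length v'" "length v \<le> length u"
  shows "v = v'"
proof (rule nth_equalityI)
  fix i assume "i < length v"
  moreover have "xor_pad u v ! i = xor_pad u v' ! i" using assms(1) by simp
  ultimately show "v ! i = v' ! i" using assms(2,3) by (auto simp: nth_xor_pad nth_append)
qed (fact assms(2))

lemma length_concat_map_sorted_list_of_set:
  "finite T \<Longrightarrow> length (concat (map g (sorted_list_of_set T))) = (\<Sum>k\<in>T. length (g k))"
  by (simp add: length_concat sum_list_distinct_conv_sum_set)

lemma concat_map_sorted_list_of_set_eqD:
  assumes "concat (map g (sorted_list_of_set T)) = concat (map h (sorted_list_of_set T))"
    and "finite T" "\<forall>k\<in>T. length (g k) = length (h k)" "k \<in> T"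
  shows "g k = h k"
proof -
  have "map g (sorted_list_of_set T) = map h (sorted_list_of_set T)"
    using assms(1-3) by (intro concat_injective)
      (auto simp: set_zip, metis nth_mem set_sorted_list_of_set length_sorted_list_of_set)
  with assms(2,4) show ?thesis by simp
qed

lemma length_msgs: "x \<in> msgs n q \<Longrightarrow> k \<in> {1..n} \<Longrightarrow> length (x k) = q k"
  by (simp add: msgs_def)

lemma has_index_code_if_decodable:
  fixes E :: "(nat \<Rightarrow> bool list) \<Rightarrow> bool list"
  assumes "\<forall>x\<in>msgs n q. length (E x) = l"
    and "\<And>x x' i j. \<lbrakk>x \<in> msgs n q; x' \<in> msgs n q; E x = E x'; x i = x' i;
                      i \<in> {1..n}; (j, i) \<in> A\<rbrakk> \<Longrightarrow> x j = x' j"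
  shows "has_index_code n A q l"
proof -
  define D where "D i c xi j = (SOME x'. x' \<in> msgs n q \<and> E x' = c \<and> x' i = xi) j"
    for i :: nat and c xi and j :: nat
  have "D i (E x) (x i) j = x j" if "x \<in> msgs n q" "i \<in> {1..n}" "(j, i) \<in> A" for x i j
  proof -
    define x' where "x' = (SOME x'. x' \<in> msgs n q \<and> E x' = E x \<and> x' i = x i)"
    have "x' \<in> msgs n q" "E x' = E x" "x' i = x i"
      unfolding x'_def by (rule someI2[where a = x], simp add: that(1), simp)+
    then have "x' j = x j" using assms(2)[of x' x i j] that by simp
    then show ?thesis by (simp add: D_def x'_def)
  qed
  with assms(1) have "is_index_code n A q l E D" by (simp add: is_index_code_def)
  then show ?thesis by (auto simp: has_index_code_def)
qed

lemma opt_len_le: "has_index_code n A q l \<Longrightarrow> opt_len n A q \<le> l"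
  unfolding opt_len_def by (rule Least_le)

context
  fixes n :: nat and A :: "(nat \<times> nat) set" and q :: "nat \<Rightarrow> nat"
begin

lemma arg_min_on_leaf_scc:
  assumes "is_leaf_scc n A S"
  shows "arg_min_on q S \<in> S" and "k \<in> S \<Longrightarrow> q (arg_min_on q S) \<le> q k"
    and "q (arg_min_on q S) = Min (q ` S)"
proof -
  note fin = is_leaf_scc_finite[OF assms] and ne = is_leaf_scc_nonempty[OF assms]
  show root: "arg_min_on q S \<in> S" using arg_min_if_finite(1)[OF fin ne] .
  show least: "q (arg_min_on q S) \<le> q k" if "k \<in> S" for k using arg_min_least[OF fin ne that] .
  show "q (arg_min_on q S) = Min (q ` S)"
    using fin root least by (intro Min_eqI[symmetric]) auto
qed

definition root_of :: "nat \<Rightarrow> nat" where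
  "root_of k = arg_min_on q (THE S. is_leaf_scc n A S \<and> k \<in> S)"

lemma root_of_eq: "is_leaf_scc n A S \<Longrightarrow> k \<in> S \<Longrightarrow> root_of k = arg_min_on q S"
  unfolding root_of_def by (rule arg_cong[where f = "arg_min_on q"], rule the_equality)
    (simp, metis is_leaf_scc_unique)

definition coded_vertices :: "nat set" where
  "coded_vertices = {1..n} - leaf_vertices n A - arg_min_on q ` {S. is_leaf_scc n A S}"

lemma in_coded_vertices_if_leaf_scc:
  assumes "is_leaf_scc n A S" "k \<in> S" "k \<noteq> arg_min_on q S"
  shows "k \<in> coded_vertices"
proof -
  have "k \<notin> arg_min_on q ` {S. is_leaf_scc n A S}"
  proof
    assume "k \<in> arg_min_on q ` {S. is_leaf_scc n A S}"
    then obtain S' where S': "is_leaf_scc n A S'" "k = arg_min_on q S'" by blast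
    then have "S' = S"
      using is_leaf_scc_unique[OF S'(1) assms(1) _ assms(2)] arg_min_on_leaf_scc(1)[OF S'(1)] by simp
    with S'(2) assms(3) show False by simp
  qed
  with assms(1,2) is_leaf_scc_subset is_leaf_scc_disjoint_leaf_vertices show ?thesis
    unfolding coded_vertices_def by blast
qed

definition coded_symbol :: "(nat \<Rightarrow> bool list) \<Rightarrow> nat \<Rightarrow> bool list" where
  "coded_symbol x k =
     (if \<exists>S. is_leaf_scc n A S \<and> k \<in> S then xor_pad (x k) (x (root_of k)) else x k)"

definition encoder :: "(nat \<Rightarrow> bool list) \<Rightarrow> bool list" where
  "encoder x = concat (map (coded_symbol x) (sorted_list_of_set coded_vertices))"

lemma length_coded_symbol: "x \<in> msgs n q \<Longrightarrow> k \<in> {1..n} \<Longrightarrow> length (coded_symbol x k) = q k"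
  by (simp add: coded_symbol_def msgs_def)

lemma length_encoder: "x \<in> msgs n q \<Longrightarrow> length (encoder x) = sum q coded_vertices"
  unfolding encoder_def coded_vertices_def
  by (simp add: length_concat_map_sorted_list_of_set length_coded_symbol)

lemma encoder_eqD:
  assumes "x \<in> msgs n q" "x' \<in> msgs n q" "encoder x = encoder x'" "k \<in> coded_vertices"
  shows "coded_symbol x k = coded_symbol x' k"
proof (rule concat_map_sorted_list_of_set_eqD)
  show "concat (map (coded_symbol x) (sorted_list_of_set coded_vertices))
      = concat (map (coded_symbol x') (sorted_list_of_set coded_vertices))"
    using assms(3) by (simp add: encoder_def)
  show "\<forall>k\<in>coded_vertices. length (coded_symbol x k) = length (coded_symbol x' k)"
    using assms(1,2) by (simp add: coded_vertices_def length_coded_symbol)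
qed (simp add: coded_vertices_def, fact assms(4))

lemma coded_symbol_in_leaf_scc:
  assumes "is_leaf_scc n A S" "k \<in> S"
  shows "coded_symbol x k = xor_pad (x k) (x (arg_min_on q S))"
proof -
  have "\<exists>S. is_leaf_scc n A S \<and> k \<in> S" using assms by blast
  with root_of_eq[OF assms] show ?thesis by (simp add: coded_symbol_def)
qed

lemma coded_symbol_outside_leaf_sccs:
  "\<nexists>S. is_leaf_scc n A S \<and> k \<in> S \<Longrightarrow> coded_symbol x k = x k"
  unfolding coded_symbol_def by (rule if_not_P)

text \<open>A receiver in a leaf SCC recovers the root message: it knows it already, or it strips
  its own message off the root-coded symbol it would otherwise send.\<close>

lemma encoder_determines_root:
  assumes x: "x \<in> msgs n q" and x': "x' \<in> msgs n q" and enc: "encoder x = encoder x'"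
    and S: "is_leaf_scc n A S" and i: "i \<in> S" and known: "x i = x' i"
  shows "x (arg_min_on q S) = x' (arg_min_on q S)"
proof (cases "i = arg_min_on q S")
  case False
  let ?a = "arg_min_on q S"
  have "?a \<in> {1..n}" "i \<in> {1..n}"
    using arg_min_on_leaf_scc(1)[OF S] i is_leaf_scc_subset[OF S] by blast+
  moreover have "q ?a \<le> q i" using arg_min_on_leaf_scc(2)[OF S i] .
  ultimately have "length (x ?a) = length (x' ?a)" "length (x ?a) \<le> length (x i)"
    using length_msgs[OF x] length_msgs[OF x'] by simp_all
  moreover have "coded_symbol x i = coded_symbol x' i"
    using encoder_eqD[OF x x' enc in_coded_vertices_if_leaf_scc[OF S i False]] .
  then have "xor_pad (x i) (x ?a) = xor_pad (x i) (x' ?a)"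
    using known by (simp add: coded_symbol_in_leaf_scc[OF S i])
  ultimately show ?thesis by (blast intro: xor_pad_inj_right)
qed (use known in simp)

lemma encoder_decodable:
  assumes x: "x \<in> msgs n q" and x': "x' \<in> msgs n q" and enc: "encoder x = encoder x'"
    and known: "x i = x' i" and arc: "(j, i) \<in> A"
  shows "x j = x' j"
proof (cases "\<exists>S. is_leaf_scc n A S \<and> j \<in> S")
  case True
  then obtain S where S: "is_leaf_scc n A S" "j \<in> S" by blast
  let ?a = "arg_min_on q S"
  have root: "x ?a = x' ?a"
    using encoder_determines_root[OF x x' enc S(1) is_leaf_scc_closed[OF S arc] known] .
  show ?thesis
  proof (cases "j = ?a")
    case False
    have "coded_symbol x j = coded_symbol x' j"
      using encoder_eqD[OF x x' enc in_coded_vertices_if_leaf_scc[OF S False]] .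
    then have "xor_pad (xor_pad (x j) (x ?a)) (x ?a) = xor_pad (xor_pad (x' j) (x' ?a)) (x' ?a)"
      using root by (simp add: coded_symbol_in_leaf_scc[OF S])
    then show ?thesis by simp
  qed (use root in simp)
next
  case False
  show ?thesis
  proof (cases "j \<in> {1..n}")
    case True
    have "j \<notin> leaf_vertices n A" using arc by (auto simp: leaf_vertices_def)
    moreover have "j \<notin> arg_min_on q ` {S. is_leaf_scc n A S}"
      using False arg_min_on_leaf_scc(1) by blast
    ultimately have "j \<in> coded_vertices" using True by (simp add: coded_vertices_def)
    then have "coded_symbol x j = coded_symbol x' j" by (rule encoder_eqD[OF x x' enc])
    then show ?thesis by (simp add: coded_symbol_outside_leaf_sccs[OF False])
  next
    case False
    with x x' show ?thesis by (simp add: msgs_def)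
  qed
qed

lemma opt_len_le_sum_coded_vertices: "opt_len n A q \<le> sum q coded_vertices"
proof (rule opt_len_le)
  show "has_index_code n A q (sum q coded_vertices)"
    by (rule has_index_code_if_decodable[where E = encoder])
      (simp add: length_encoder, blast intro: encoder_decodable)
qed

lemma sum_coded_vertices:
  "sum q {1..n} = sum q coded_vertices + sum q (leaf_vertices n A)
                    + (\<Sum>S\<in>{S. is_leaf_scc n A S}. Min (q ` S))"
proof -
  let ?L = "leaf_vertices n A" and ?LS = "{S. is_leaf_scc n A S}"
  let ?R = "arg_min_on q ` ?LS"
  have L: "?L \<subseteq> {1..n}" by (auto simp: leaf_vertices_def)
  have R: "?R \<subseteq> {1..n}" using arg_min_on_leaf_scc(1) is_leaf_scc_subset by blast
  have "?L \<inter> ?R = {}" using arg_min_on_leaf_scc(1) is_leaf_scc_disjoint_leaf_vertices by blast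
  have inj: "inj_on (arg_min_on q) ?LS"
  proof (rule inj_onI)
    fix S S' assume "S \<in> ?LS" "S' \<in> ?LS" "arg_min_on q S = arg_min_on q S'"
    then show "S = S'"
      using arg_min_on_leaf_scc(1)[of S] arg_min_on_leaf_scc(1)[of S'] is_leaf_scc_unique[of n A S S']
      by simp
  qed
  have "sum q {1..n} = sum q coded_vertices + sum q (?L \<union> ?R)"
  proof -
    have "coded_vertices = {1..n} - (?L \<union> ?R)" by (auto simp: coded_vertices_def)
    with L R show ?thesis using sum.subset_diff[of "?L \<union> ?R" "{1..n}" q] by simp
  qed
  also have "sum q (?L \<union> ?R) = sum q ?L + sum q ?R"
    using finite_subset[OF L] finite_subset[OF R] \<open>?L \<inter> ?R = {}\<close> by (simp add: sum.union_disjoint)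
  also have "sum q ?R = (\<Sum>S\<in>?LS. q (arg_min_on q S))"
    by (simp add: sum.reindex[OF inj])
  also have "\<dots> = (\<Sum>S\<in>?LS. Min (q ` S))"
    by (rule sum.cong) (simp_all add: arg_min_on_leaf_scc(3))
  finally show ?thesis by simp
qed

end

text \<open>The bound holds for every arc set.\<close>

theorem theorem2:
  fixes n :: nat and A :: "(nat \<times> nat) set" and q :: "nat \<Rightarrow> nat"
  assumes "A \<subseteq> {1..n} \<times> {1..n}"
    and "\<forall>i. (i, i) \<notin> A"
    and "\<forall>i\<in>{1..n}. q i \<ge> 1"
  shows "int (opt_len n A q) \<le>
           (\<Sum>k\<in>{1..n}. int (q k)) - (\<Sum>i\<in>leaf_vertices n A. int (q i))
           - (\<Sum>S\<in>{S. is_leaf_scc n A S}. int (Min (q ` S)))"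
proof -
  have "int (opt_len n A q) \<le> int (sum q (coded_vertices n A q))"
    using opt_len_le_sum_coded_vertices by (simp only: of_nat_le_iff)
  also have "\<dots> = int (sum q {1..n}) - int (sum q (leaf_vertices n A))
                  - int (\<Sum>S\<in>{S. is_leaf_scc n A S}. Min (q ` S))"
    using sum_coded_vertices[of q n A] by simp
  finally show ?thesis by (simp add: of_nat_sum)
qed

end
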